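(* Let $V$ be a real Hilbert space, $W\subset V$ a subspace of finite dimension $m$, $\mathcal M\subset V$ a bounded set, and $Z_N\subset V$ a subspace of finite dimension $N$. Let $\widetilde W^\perp$ be the orthogonal complement of $W$ in $W+Z_N$, and set $\varepsilon_N:=\sup_{u\in\mathcal M}\operatorname{dist}(u,Z_N)$. Define, for $c\in W^\perp$ and linear $B:W\to W^\perp$, $$F(c,B)=\sup_{u\in\mathcal M}\|P_{W^\perp}u-c-B(P_Wu)\|,$$ and suppose $(\bar c,\bar B)$ minimizes $F$ over $\widetilde W^\perp\times\mathcal L(W,\widetilde W^\perp)$. Let $\widetilde A(w)=w+\bar c+\bar B w$. Then, with $E^*_{\mathrm{wca}}(\mathcal M):=\inf\{E_{\mathrm{wc}}(A,\mathcal M): A:W\to V\text{ affine}\}$, $$E^*_{\mathrm{wca}}(\mathcal M)\le E_{\mathrm{wc}}(\widetilde A,\mathcal M)\le E^*_{\mathrm{wca}}(\mathcal M)+\varepsilon_N.$$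
   Context: $P_W$, $P_{W^\perp}$ are orthogonal projections onto $W$ and its orthogonal complement $W^\perp$ in $V$. $\mathcal L(X,Y)$ denotes linear maps from $X$ to $Y$. For a map $A:W\to V$, $E_{\mathrm{wc}}(A,\mathcal M)=\sup\{\|u-A(P_Wu)\|:u\in\mathcal M\}$. $\operatorname{dist}(u,Z_N)=\inf_{z\in Z_N}\|u-z\|$. *)

theory Defs
  imports "HOL-Analysis.Analysis"
begin

definition orth_compl :: "'a::real_inner set \<Rightarrow> 'a set" where
  "orth_compl S = {x. \<forall>y\<in>S. inner x y = 0}"

definition orth_proj :: "'a::real_inner set \<Rightarrow> 'a \<Rightarrow> 'a" where
  "orth_proj S u = (THE p. p \<in> S \<and> (\<forall>y\<in>S. inner (u - p) y = 0))"

definition E_wc :: "'a::real_inner set \<Rightarrow> ('a \<Rightarrow> 'a) \<Rightarrow> 'a set \<Rightarrow> real" where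
  "E_wc W A M = (SUP u\<in>M. norm (u - A (orth_proj W u)))"

definition affine_on :: "'a::real_vector set \<Rightarrow> ('a \<Rightarrow> 'a) \<Rightarrow> bool" where
  "affine_on W A \<longleftrightarrow> (\<exists>c L. linear L \<and> (\<forall>w\<in>W. A w = c + L w))"

definition E_wca_opt :: "'a::real_inner set \<Rightarrow> 'a set \<Rightarrow> real" where
  "E_wca_opt W M = (INF A\<in>{A. affine_on W A}. E_wc W A M)"

definition F_obj :: "'a::real_inner set \<Rightarrow> 'a set \<Rightarrow> 'a \<Rightarrow> ('a \<Rightarrow> 'a) \<Rightarrow> real" where
  "F_obj W M c B = (SUP u\<in>M. norm (orth_proj (orth_compl W) u - c - B (orth_proj W u)))"

end

theory Submission
  imports Defs
begin

text \<open>The error of \<open>\<widetilde>A\<close> at u is \<open>P\<^sub>W\<^sub>\<perp> u - cbar - Bbar (P\<^sub>W u)\<close>, so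
  \<open>E\<^sub>w\<^sub>c(\<widetilde>A) = F(cbar, Bbar)\<close>. Given any affine \<open>A = c + L\<close>, let R be the orthogonal projection
  onto \<open>\<widetilde>W\<^sup>\<perp>\<close>. The pair \<open>(R P\<^sub>W\<^sub>\<perp> c, R P\<^sub>W\<^sub>\<perp> L)\<close> is admissible, and its residual splits as
  \<open>R P\<^sub>W\<^sub>\<perp> (u - A (P\<^sub>W u)) + (P\<^sub>W\<^sub>\<perp> u - R P\<^sub>W\<^sub>\<perp> u)\<close>: the first term is at most the error of A,
  the second at most \<open>dist(u, Z)\<close>. Minimality of \<open>(cbar, Bbar)\<close> then gives
  \<open>E\<^sub>w\<^sub>c(\<widetilde>A) \<le> E\<^sub>w\<^sub>c(A) + \<epsilon>\<^sub>N\<close>.\<close>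

section \<open>Orthogonal projection onto finite-dimensional subspaces\<close>

lemma subspace_orth_compl: "subspace (orth_compl S)"
  unfolding subspace_def orth_compl_def by (auto simp: inner_add_left)

lemma orth_proj_eqI:
  assumes "subspace S" "p \<in> S" "\<And>y. y \<in> S \<Longrightarrow> inner (u - p) y = 0"
  shows "orth_proj S u = p"
  unfolding orth_proj_def
proof (rule the_equality)
  show "p \<in> S \<and> (\<forall>y\<in>S. inner (u - p) y = 0)" using assms by blast
next
  fix q assume q: "q \<in> S \<and> (\<forall>y\<in>S. inner (u - q) y = 0)"
  have "q - p \<in> S" using assms(1,2) q by (simp add: subspace_diff)
  then have "inner (u - q) (q - p) = 0" "inner (u - p) (q - p) = 0" using q assms(3) by auto
  then have "inner (q - p) (q - p) = 0" by (simp add: algebra_simps)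
  then show "q = p" by simp
qed

text \<open>Zero vectors in C contribute nothing, since \<open>x / 0 = 0\<close>.\<close>
lemma orthogonal_sum_residual:
  fixes C :: "'a::real_inner set"
  assumes "finite C" "pairwise orthogonal C" "y \<in> span C"
  shows "inner (u - (\<Sum>c\<in>C. (inner u c / inner c c) *\<^sub>R c)) y = 0"
proof -
  let ?p = "\<Sum>c\<in>C. (inner u c / inner c c) *\<^sub>R c"
  have "orthogonal (u - ?p) c" if c: "c \<in> C" for c
  proof -
    have "inner ?p c = (\<Sum>c'\<in>C. if c' = c then inner u c else 0)"
      unfolding inner_sum_left
    proof (rule sum.cong[OF refl])
      fix c' assume "c' \<in> C"
      then show "inner ((inner u c' / inner c' c') *\<^sub>R c') c = (if c' = c then inner u c else 0)"
        using assms(2) c by (auto simp: pairwise_def orthogonal_def)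
    qed
    then show ?thesis using assms(1) c by (simp add: orthogonal_def inner_diff_left)
  qed
  then show ?thesis
    using orthogonal_to_span[OF assms(3)] by (simp add: orthogonal_def)
qed

lemma orth_proj_span_orthogonal:
  fixes C :: "'a::real_inner set"
  assumes "finite C" "pairwise orthogonal C"
  shows "orth_proj (span C) u = (\<Sum>c\<in>C. (inner u c / inner c c) *\<^sub>R c)"
  by (rule orth_proj_eqI[OF subspace_span])
     (auto intro: span_sum span_mul span_base orthogonal_sum_residual[OF assms])

lemma orth_proj_span:
  fixes B :: "'a::real_inner set"
  assumes "finite B"
  shows orth_proj_in_span: "orth_proj (span B) u \<in> span B"
    and orth_proj_residual_orthogonal: "y \<in> span B \<Longrightarrow> inner (u - orth_proj (span B) u) y = 0"
proof -
  obtain C where C: "finite C" "span C = span B" "pairwise orthogonal C"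
    using basis_orthogonal[OF assms] by blast
  show "orth_proj (span B) u \<in> span B"
    unfolding C(2)[symmetric] orth_proj_span_orthogonal[OF C(1,3)]
    by (intro span_sum span_mul span_base)
  show "inner (u - orth_proj (span B) u) y = 0" if "y \<in> span B"
    using that unfolding C(2)[symmetric] orth_proj_span_orthogonal[OF C(1,3)]
    by (rule orthogonal_sum_residual[OF C(1,3)])
qed

lemma linear_orth_proj_span:
  fixes B :: "'a::real_inner set"
  assumes "finite B"
  shows "linear (orth_proj (span B))"
proof (rule linearI)
  fix x y :: 'a and r :: real
  show "orth_proj (span B) (x + y) = orth_proj (span B) x + orth_proj (span B) y"
    using orth_proj_residual_orthogonal[OF assms, of _ x] orth_proj_residual_orthogonal[OF assms, of _ y]
    by (intro orth_proj_eqI subspace_span span_add orth_proj_in_span assms)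
       (simp add: inner_diff_left inner_add_left)
  show "orth_proj (span B) (r *\<^sub>R x) = r *\<^sub>R orth_proj (span B) x"
    using orth_proj_residual_orthogonal[OF assms, of _ x]
    by (intro orth_proj_eqI subspace_span span_mul orth_proj_in_span assms)
       (simp add: inner_diff_left)
qed

lemma norm_le_norm_add_orthogonal:
  fixes a b :: "'a::real_inner"
  assumes "orthogonal a b"
  shows "norm a \<le> norm (a + b)"
  using norm_add_Pythagorean[OF assms] by (simp add: power2_le_imp_le)

lemma orth_proj_span_best:
  fixes B :: "'a::real_inner set"
  assumes "finite B" "y \<in> span B"
  shows "norm (u - orth_proj (span B) u) \<le> norm (u - y)"
proof -
  have "orth_proj (span B) u - y \<in> span B"
    by (intro span_diff orth_proj_in_span assms)
  then have "orthogonal (u - orth_proj (span B) u) (orth_proj (span B) u - y)"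
    using orth_proj_residual_orthogonal[OF assms(1)] by (simp add: orthogonal_def)
  from norm_le_norm_add_orthogonal[OF this] show ?thesis by simp
qed

lemma norm_orth_proj_span_le:
  fixes B :: "'a::real_inner set"
  assumes "finite B"
  shows "norm (orth_proj (span B) u) \<le> norm u"
proof -
  have "orthogonal (orth_proj (span B) u) (u - orth_proj (span B) u)"
    using orth_proj_residual_orthogonal[OF assms orth_proj_in_span[OF assms]]
    by (simp add: orthogonal_def inner_commute)
  from norm_le_norm_add_orthogonal[OF this] show ?thesis by simp
qed

lemma orth_proj_orth_compl_span:
  fixes B :: "'a::real_inner set"
  assumes "finite B"
  shows "orth_proj (orth_compl (span B)) u = u - orth_proj (span B) u"
  using orth_proj_residual_orthogonal[OF assms] orth_proj_in_span[OF assms]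
  by (intro orth_proj_eqI subspace_orth_compl) (auto simp: orth_compl_def inner_commute)

lemma orth_proj_span_orth_compl:
  fixes B :: "'a::real_inner set"
  assumes "finite B" "y \<in> orth_compl (span B)"
  shows "orth_proj (span B) y = 0"
  using assms(2) by (intro orth_proj_eqI subspace_span span_zero) (simp add: orth_compl_def)

lemma orth_proj_span_linear_bound:
  fixes B :: "'a::real_inner set" and L :: "'a \<Rightarrow> 'b::real_normed_vector"
  assumes "finite B" "linear L"
  obtains K where "0 \<le> K" "\<And>u. norm (L (orth_proj (span B) u)) \<le> K * norm u"
proof -
  obtain C where C: "finite C" "span C = span B" "pairwise orthogonal C"
    using basis_orthogonal[OF assms(1)] by blast
  define K where "K = (\<Sum>c\<in>C. norm (L c) / norm c)"
  have "norm (L (orth_proj (span B) u)) \<le> K * norm u" for u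
  proof -
    have "norm (L (orth_proj (span B) u)) = norm (\<Sum>c\<in>C. (inner u c / inner c c) *\<^sub>R L c)"
      unfolding C(2)[symmetric] orth_proj_span_orthogonal[OF C(1,3)]
      by (simp add: linear_sum[OF assms(2)] linear_scale[OF assms(2)])
    also have "\<dots> \<le> (\<Sum>c\<in>C. norm ((inner u c / inner c c) *\<^sub>R L c))"
      by (rule norm_sum)
    also have "\<dots> \<le> (\<Sum>c\<in>C. norm u * (norm (L c) / norm c))"
    proof (rule sum_mono)
      fix c
      show "norm ((inner u c / inner c c) *\<^sub>R L c) \<le> norm u * (norm (L c) / norm c)"
      proof (cases "c = 0")
        case False
        have "\<bar>inner u c\<bar> / inner c c \<le> norm u * norm c / (norm c)\<^sup>2"
          using Cauchy_Schwarz_ineq2[of u c] by (simp add: power2_norm_eq_inner divide_right_mono)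
        also have "\<dots> = norm u / norm c" using False by (simp add: power2_eq_square)
        finally have "\<bar>inner u c / inner c c\<bar> * norm (L c) \<le> norm u / norm c * norm (L c)"
          by (metis abs_divide abs_of_nonneg inner_ge_zero mult_right_mono norm_ge_zero)
        then show ?thesis by simp
      qed simp
    qed
    finally show ?thesis by (simp add: K_def sum_distrib_left mult.commute)
  qed
  moreover have "0 \<le> K" by (simp add: K_def sum_nonneg)
  ultimately show ?thesis using that by blast
qed

lemma linear_orth_proj_orth_compl_span:
  fixes B :: "'a::real_inner set"
  assumes "finite B"
  shows "linear (orth_proj (orth_compl (span B)))"
  unfolding orth_proj_orth_compl_span[OF assms, abs_def]
  by (intro linear_compose_sub linear_ident linear_orth_proj_span assms)

lemma norm_orth_proj_orth_compl_span_le: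
  fixes B :: "'a::real_inner set"
  assumes "finite B"
  shows "norm (orth_proj (orth_compl (span B)) u) \<le> norm u"
  using orth_proj_span_best[OF assms span_zero, of u] by (simp add: orth_proj_orth_compl_span[OF assms])

section \<open>The restricted minimisation problem\<close>

definition compl_in_sum :: "'a::real_inner set \<Rightarrow> 'a set \<Rightarrow> 'a set" where
  "compl_in_sum W Z = {w + z | w z. w \<in> W \<and> z \<in> Z} \<inter> orth_compl W"

lemma compl_in_sum_span:
  fixes BW BZ :: "'a::real_inner set"
  assumes "finite BW"
  shows "compl_in_sum (span BW) (span BZ) = span (orth_proj (orth_compl (span BW)) ` (BW \<union> BZ))"
proof -
  let ?Q = "orth_proj (orth_compl (span BW))"
  have "compl_in_sum (span BW) (span BZ) = ?Q ` span (BW \<union> BZ)"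
  proof
    show "compl_in_sum (span BW) (span BZ) \<subseteq> ?Q ` span (BW \<union> BZ)"
    proof
      fix y assume "y \<in> compl_in_sum (span BW) (span BZ)"
      then have y: "y \<in> span (BW \<union> BZ)" "y \<in> orth_compl (span BW)"
        by (auto simp: compl_in_sum_def span_Un)
      then have "?Q y = y"
        by (simp add: orth_proj_orth_compl_span orth_proj_span_orth_compl assms)
      with y(1) show "y \<in> ?Q ` span (BW \<union> BZ)" by force
    qed
  next
    show "?Q ` span (BW \<union> BZ) \<subseteq> compl_in_sum (span BW) (span BZ)"
    proof
      fix y assume "y \<in> ?Q ` span (BW \<union> BZ)"
      then obtain x where x: "x \<in> span (BW \<union> BZ)" "y = x - orth_proj (span BW) x"
        by (auto simp: orth_proj_orth_compl_span assms)
      have "orth_proj (span BW) x \<in> span (BW \<union> BZ)"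
        using orth_proj_in_span[OF assms] span_mono[of BW "BW \<union> BZ"] by blast
      then have "y \<in> span (BW \<union> BZ)" using x by (simp add: span_diff)
      moreover have "y \<in> orth_compl (span BW)"
        using orth_proj_residual_orthogonal[OF assms] x(2) by (simp add: orth_compl_def)
      ultimately show "y \<in> compl_in_sum (span BW) (span BZ)"
        by (simp add: compl_in_sum_def span_Un)
    qed
  qed
  then show ?thesis
    by (simp add: span_linear_image linear_orth_proj_orth_compl_span assms)
qed

lemma orth_proj_orth_compl_in_compl_in_sum:
  fixes BW BZ :: "'a::real_inner set"
  assumes "finite BW" "z \<in> span BZ"
  shows "orth_proj (orth_compl (span BW)) z \<in> compl_in_sum (span BW) (span BZ)"
proof -
  have "z \<in> span (BW \<union> BZ)" using assms(2) span_mono[of BZ "BW \<union> BZ"] by blast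
  then show ?thesis
    unfolding compl_in_sum_span[OF assms(1)]
    using span_linear_image[OF linear_orth_proj_orth_compl_span[OF assms(1)]] by blast
qed

text \<open>Projecting \<open>P\<^sub>W\<^sub>\<perp> u\<close> onto \<open>\<widetilde>W\<^sup>\<perp>\<close> loses at most \<open>dist(u, Z)\<close>,
  because \<open>P\<^sub>W\<^sub>\<perp>\<close> is non-expansive and maps Z into \<open>\<widetilde>W\<^sup>\<perp>\<close>.\<close>
lemma residual_compl_in_sum_le_infdist:
  fixes BW BZ :: "'a::real_inner set"
  assumes "finite BW" "finite BZ"
  defines "Q \<equiv> orth_proj (orth_compl (span BW))"
    and "R \<equiv> orth_proj (compl_in_sum (span BW) (span BZ))"
  shows "norm (Q u - R (Q u)) \<le> infdist u (span BZ)"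
proof -
  have R_span: "R = orth_proj (span (Q ` (BW \<union> BZ)))"
    unfolding R_def Q_def compl_in_sum_span[OF assms(1)] ..
  have "norm (Q u - R (Q u)) \<le> dist u z" if z: "z \<in> span BZ" for z
  proof -
    have "norm (Q u - R (Q u)) \<le> norm (Q u - Q z)"
      unfolding R_span using assms(1,2) orth_proj_orth_compl_in_compl_in_sum[OF assms(1) z]
      by (intro orth_proj_span_best) (auto simp: Q_def compl_in_sum_span)
    also have "\<dots> = norm (Q (u - z))"
      by (simp add: Q_def linear_diff linear_orth_proj_orth_compl_span assms(1))
    also have "\<dots> \<le> dist u z"
      by (simp add: Q_def dist_norm norm_orth_proj_orth_compl_span_le assms(1))
    finally show ?thesis .
  qed
  moreover have "span BZ \<noteq> {}" using span_zero by blast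
  ultimately show ?thesis
    by (simp add: infdist_notempty cINF_greatest)
qed

section \<open>Worst-case errors of affine maps\<close>

lemma bdd_above_affine_errors:
  fixes B M :: "'a::real_inner set"
  assumes "finite B" "bounded M" "affine_on (span B) A"
  shows "bdd_above ((\<lambda>u. norm (u - A (orth_proj (span B) u))) ` M)"
proof -
  obtain c L where cL: "linear L" "\<And>w. w \<in> span B \<Longrightarrow> A w = c + L w"
    using assms(3) unfolding affine_on_def by blast
  obtain K where K: "0 \<le> K" "\<And>u. norm (L (orth_proj (span B) u)) \<le> K * norm u"
    using orth_proj_span_linear_bound[OF assms(1) cL(1)] by blast
  obtain R where R: "\<And>u. u \<in> M \<Longrightarrow> norm u \<le> R" using assms(2) bounded_iff by blast
  show ?thesis
  proof (rule bdd_aboveI2)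
    fix u assume u: "u \<in> M"
    have "norm (u - A (orth_proj (span B) u)) = norm (u - c - L (orth_proj (span B) u))"
      by (simp add: cL(2) orth_proj_in_span assms(1) algebra_simps)
    also have "\<dots> \<le> norm u + norm c + K * norm u"
      using K(2)[of u] norm_triangle_ineq4[of "u - c" "L (orth_proj (span B) u)"]
        norm_triangle_ineq4[of u c] by linarith
    also have "\<dots> \<le> R + norm c + K * R"
      using R[OF u] K(1) by (simp add: add_mono mult_left_mono)
    finally show "norm (u - A (orth_proj (span B) u)) \<le> R + norm c + K * R" .
  qed
qed

lemma E_wc_upper:
  fixes B M :: "'a::real_inner set"
  assumes "finite B" "bounded M" "affine_on (span B) A" "u \<in> M"
  shows "norm (u - A (orth_proj (span B) u)) \<le> E_wc (span B) A M"
  unfolding E_wc_def using assms(4) bdd_above_affine_errors[OF assms(1-3)] by (rule cSUP_upper)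

lemma E_wca_opt_le_E_wc:
  fixes B M :: "'a::real_inner set"
  assumes "finite B" "bounded M" "M \<noteq> {}" "affine_on (span B) A"
  shows "E_wca_opt (span B) M \<le> E_wc (span B) A M"
proof -
  obtain u where "u \<in> M" using assms(3) by blast
  then have "0 \<le> E_wc (span B) A' M" if "affine_on (span B) A'" for A'
    using E_wc_upper[OF assms(1,2) that] norm_ge_zero order_trans by blast
  then have "bdd_below ((\<lambda>A. E_wc (span B) A M) ` {A. affine_on (span B) A})"
    by (intro bdd_belowI2[where m = 0]) simp
  then show ?thesis
    unfolding E_wca_opt_def using assms(4) by (intro cINF_lower) simp_all
qed

lemma bdd_above_infdist:
  fixes M :: "'a::metric_space set"
  assumes "bounded M" "z \<in> Z"
  shows "bdd_above ((\<lambda>u. infdist u Z) ` M)"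
proof -
  obtain K where K: "\<And>u. u \<in> M \<Longrightarrow> dist z u \<le> K" using assms(1) bounded_any_center by blast
  show ?thesis
  proof (rule bdd_aboveI2)
    fix u assume "u \<in> M"
    have "infdist u Z \<le> dist z u" using infdist_le[OF assms(2), of u] by (simp only: dist_commute)
    also have "\<dots> \<le> K" using K \<open>u \<in> M\<close> .
    finally show "infdist u Z \<le> K" .
  qed
qed

lemma E_wc_eq_F_obj:
  fixes B M :: "'a::real_inner set"
  assumes "finite B"
  shows "E_wc (span B) (\<lambda>w. w + c + L w) M = F_obj (span B) M c L"
  unfolding E_wc_def F_obj_def orth_proj_orth_compl_span[OF assms] by (simp add: algebra_simps)

lemma F_obj_compl_in_sum_le:
  fixes BW BZ M :: "'a::real_inner set"
  assumes "finite BW" "finite BZ" "bounded M" "M \<noteq> {}" "affine_on (span BW) A"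
  defines "Wt \<equiv> compl_in_sum (span BW) (span BZ)"
  obtains c L where "c \<in> Wt" "linear L" "L ` span BW \<subseteq> Wt"
    "F_obj (span BW) M c L \<le> E_wc (span BW) A M + (SUP u\<in>M. infdist u (span BZ))"
proof -
  obtain c0 L0 where cL: "linear L0" "\<And>w. w \<in> span BW \<Longrightarrow> A w = c0 + L0 w"
    using assms(5) unfolding affine_on_def by blast
  define P where "P = orth_proj (span BW)"
  define Q where "Q = orth_proj (orth_compl (span BW))"
  define R where "R = orth_proj Wt"
  have Wt_span: "Wt = span (Q ` (BW \<union> BZ))"
    unfolding Wt_def Q_def by (rule compl_in_sum_span[OF assms(1)])
  have linQ: "linear Q" unfolding Q_def by (rule linear_orth_proj_orth_compl_span[OF assms(1)])
  have linR: "linear R" unfolding R_def Wt_span by (rule linear_orth_proj_span) (simp add: assms(1,2))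
  have R_in: "R x \<in> Wt" for x unfolding R_def Wt_span by (rule orth_proj_in_span) (simp add: assms(1,2))
  have eps_upper: "infdist u (span BZ) \<le> (SUP u\<in>M. infdist u (span BZ))" if "u \<in> M" for u
    using that bdd_above_infdist[OF assms(3) span_zero] by (rule cSUP_upper)
  show ?thesis
  proof (rule that)
    show "R (Q c0) \<in> Wt" "linear (R \<circ> Q \<circ> L0)" "(R \<circ> Q \<circ> L0) ` span BW \<subseteq> Wt"
      using R_in by (auto intro: linear_compose linQ linR cL(1))
    show "F_obj (span BW) M (R (Q c0)) (R \<circ> Q \<circ> L0)
      \<le> E_wc (span BW) A M + (SUP u\<in>M. infdist u (span BZ))"
      unfolding F_obj_def
    proof (rule cSUP_least[OF assms(4)])
      fix u assume u: "u \<in> M"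
      have "Q u - R (Q c0) - (R \<circ> Q \<circ> L0) (P u) = R (Q (u - A (P u))) + (Q u - R (Q u))"
        by (simp add: cL(2) P_def orth_proj_in_span assms(1) linear_diff[OF linR]
            linear_diff[OF linQ] linear_add[OF linQ] linear_add[OF linR])
      then have "norm (Q u - R (Q c0) - (R \<circ> Q \<circ> L0) (P u))
          \<le> norm (R (Q (u - A (P u)))) + norm (Q u - R (Q u))"
        by (metis norm_triangle_ineq)
      also have "\<dots> \<le> norm (u - A (P u)) + infdist u (span BZ)"
        using norm_orth_proj_span_le[of "Q ` (BW \<union> BZ)" "Q (u - A (P u))"]
          norm_orth_proj_orth_compl_span_le[OF assms(1), of "u - A (P u)"]
          residual_compl_in_sum_le_infdist[OF assms(1,2), of u]
        by (simp add: R_def Q_def Wt_def[symmetric] Wt_span[symmetric, unfolded Q_def] assms(1,2))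
      also have "\<dots> \<le> E_wc (span BW) A M + (SUP u\<in>M. infdist u (span BZ))"
        using E_wc_upper[OF assms(1,3,5) u] eps_upper[OF u] by (simp add: P_def)
      finally show "norm (orth_proj (orth_compl (span BW)) u - R (Q c0) - (R \<circ> Q \<circ> L0) (orth_proj (span BW) u))
          \<le> E_wc (span BW) A M + (SUP u\<in>M. infdist u (span BZ))"
        by (simp add: P_def Q_def)
    qed
  qed
qed

theorem mainTheorem3:
  fixes W Z M :: "'a::{real_inner, complete_space} set"
    and m N :: nat
    and cbar :: 'a and Bbar :: "'a \<Rightarrow> 'a"
  assumes W_sub: "subspace W" and W_fin: "\<exists>B. finite B \<and> W = span B" and W_dim: "dim W = m"
    and Z_sub: "subspace Z" and Z_fin: "\<exists>B. finite B \<and> Z = span B" and Z_dim: "dim Z = N"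
    and M_bdd: "bounded M" and M_ne: "M \<noteq> {}"
    and Wt_def: "Wt = {w + z | w z. w \<in> W \<and> z \<in> Z} \<inter> orth_compl W"
    and eps_def: "eps = (SUP u\<in>M. infdist u Z)"
    and cbar_in: "cbar \<in> Wt"
    and Bbar_lin: "linear Bbar" and Bbar_into: "Bbar ` W \<subseteq> Wt"
    and minimizer: "\<And>c B. c \<in> Wt \<Longrightarrow> linear B \<Longrightarrow> B ` W \<subseteq> Wt \<Longrightarrow>
                       F_obj W M cbar Bbar \<le> F_obj W M c B"
    and Atilde_def: "Atilde = (\<lambda>w. w + cbar + Bbar w)"
  shows "E_wca_opt W M \<le> E_wc W Atilde M \<and> E_wc W Atilde M \<le> E_wca_opt W M + eps"
proof -
  obtain BW where BW: "finite BW" "W = span BW" using W_fin by blast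
  obtain BZ where BZ: "finite BZ" "Z = span BZ" using Z_fin by blast
  have Wt: "Wt = compl_in_sum W Z" unfolding Wt_def compl_in_sum_def ..
  have Atilde_affine: "affine_on W Atilde"
    unfolding affine_on_def Atilde_def
    by (intro exI[of _ cbar] exI[of _ "\<lambda>w. w + Bbar w"] conjI linear_compose_add linear_ident Bbar_lin)
       (simp add: algebra_simps)
  have "E_wc W Atilde M \<le> E_wc W A M + eps" if A_affine: "affine_on W A" for A
  proof -
    obtain c L where "c \<in> Wt" "linear L" "L ` W \<subseteq> Wt"
      and F_le: "F_obj W M c L \<le> E_wc W A M + eps"
      using F_obj_compl_in_sum_le[OF BW(1) BZ(1) M_bdd M_ne A_affine[unfolded BW(2)]]
      unfolding Wt eps_def BW(2) BZ(2) by blast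
    have "E_wc W Atilde M = F_obj W M cbar Bbar"
      unfolding Atilde_def BW(2) by (rule E_wc_eq_F_obj[OF BW(1)])
    also have "\<dots> \<le> F_obj W M c L" by (rule minimizer) fact+
    finally show ?thesis using F_le by simp
  qed
  then have "E_wc W Atilde M - eps \<le> E_wca_opt W M"
    unfolding E_wca_opt_def using Atilde_affine by (intro cINF_greatest) (auto simp: algebra_simps)
  moreover have "E_wca_opt W M \<le> E_wc W Atilde M"
    unfolding BW(2) by (rule E_wca_opt_le_E_wc[OF BW(1) M_bdd M_ne Atilde_affine[unfolded BW(2)]])
  ultimately show ?thesis by simp
qed

end
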